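(* Let $[X,d,m]$ be a metric random walk space with invariant and reversible measure $\nu$. The following are equivalent: (1) $X$ is $m$-connected; (2) whenever $A,B\subset X$ are $\nu$-measurable sets with $\nu(A)>0$, $\nu(B)>0$ and $A\cup B=X$, one has $L_m(A,B)>0$.
   Context: A metric random walk space $[X,d,m]$ is a Polish metric space $(X,d)$ with a family $m=(m_x)_{x\in X}$ of Borel probability measures, $x\mapsto m_x(A)$ Borel measurable, each with finite first moment. A Radon measure $\nu$ is invariant if $\nu(A)=\int_X m_x(A)d\nu(x)$ for all $\nu$-measurable $A$, reversible if $dm_x(y)d\nu(x)=dm_y(x)d\nu(y)$; $(X,\nu)$ is $\sigma$-finite. Iterates $m_x^{*1}=m_x$, $m_x^{*n}(A)=\int_X m_z(A)dm_x^{*(n-1)}(z)$; $N^m_D=\{x:m_x^{*n}(D)=0\ \forall n\}$. The space is $m$-connected if $\nu(N^m_D)=0$ for every $\nu$-measurable $D$ with $0<\nu(D)<\infty$. The nonlocal interaction of $\nu$-measurable sets is $L_m(A,B)=\int_A\int_B dm_x(y)\,d\nu(x)$. *)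

theory Defs
  imports "HOL-Analysis.Analysis"
begin

definition metric_random_walk :: "('a::polish_space \<Rightarrow> 'a measure) \<Rightarrow> bool" where
  "metric_random_walk m \<longleftrightarrow>
     (\<forall>x. sets (m x) = sets borel \<and> emeasure (m x) UNIV = 1) \<and>
     (\<forall>A \<in> sets borel. (\<lambda>x. emeasure (m x) A) \<in> borel_measurable borel) \<and>
     (\<forall>x. (\<integral>\<^sup>+ y. ennreal (dist x y) \<partial>(m x)) < \<infinity>)"

text \<open>Radon measure on the Polish space: Borel, locally finite (on Polish spaces this
  implies inner regularity) and sigma-finite.\<close>
definition radon_measure :: "'a::polish_space measure \<Rightarrow> bool" where
  "radon_measure \<nu> \<longleftrightarrow> sets \<nu> = sets borel \<and> sigma_finite_measure \<nu> \<and>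
     (\<forall>x. \<exists>e>0. emeasure \<nu> (ball x e) < \<infinity>)"

definition invariant_measure :: "('a::polish_space \<Rightarrow> 'a measure) \<Rightarrow> 'a measure \<Rightarrow> bool" where
  "invariant_measure m \<nu> \<longleftrightarrow>
     (\<forall>A \<in> sets \<nu>. emeasure \<nu> A = (\<integral>\<^sup>+ x. emeasure (m x) A \<partial>\<nu>))"

text \<open>Reversibility: dm_x(y) d\<nu>(x) = dm_y(x) d\<nu>(y) as measures on X \<times> X, i.e. they
  integrate every nonnegative Borel function on X \<times> X to the same value.\<close>
definition reversible_measure :: "('a::polish_space \<Rightarrow> 'a measure) \<Rightarrow> 'a measure \<Rightarrow> bool" where
  "reversible_measure m \<nu> \<longleftrightarrow>
     (\<forall>f :: 'a \<Rightarrow> 'a \<Rightarrow> ennreal. (\<lambda>(x, y). f x y) \<in> borel_measurable (borel \<Otimes>\<^sub>M borel) \<longrightarrow>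
        (\<integral>\<^sup>+ x. (\<integral>\<^sup>+ y. f x y \<partial>(m x)) \<partial>\<nu>) = (\<integral>\<^sup>+ y. (\<integral>\<^sup>+ x. f x y \<partial>(m y)) \<partial>\<nu>))"

text \<open>Iterates, shifted by one: m_iter m n x is m_x^{*(n+1)}. So m_iter m 0 x = m_x and
  m_x^{*(n+2)}(A) = \<integral> m_z(A) d m_x^{*(n+1)}(z).\<close>
fun m_iter :: "('a::polish_space \<Rightarrow> 'a measure) \<Rightarrow> nat \<Rightarrow> 'a \<Rightarrow> 'a measure" where
  "m_iter m 0 x = m x"
| "m_iter m (Suc n) x =
     measure_of UNIV (sets borel) (\<lambda>A. \<integral>\<^sup>+ z. emeasure (m z) A \<partial>(m_iter m n x))"

definition N_set :: "('a::polish_space \<Rightarrow> 'a measure) \<Rightarrow> 'a set \<Rightarrow> 'a set" where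
  "N_set m D = {x. \<forall>n. emeasure (m_iter m n x) D = 0}"

text \<open>\<nu>-measurable sets are taken to be the Borel sets (= sets \<nu>).\<close>
definition m_connected :: "('a::polish_space \<Rightarrow> 'a measure) \<Rightarrow> 'a measure \<Rightarrow> bool" where
  "m_connected m \<nu> \<longleftrightarrow>
     (\<forall>D \<in> sets \<nu>. 0 < emeasure \<nu> D \<and> emeasure \<nu> D < \<infinity> \<longrightarrow> N_set m D \<in> null_sets \<nu>)"

definition L_m :: "('a::polish_space \<Rightarrow> 'a measure) \<Rightarrow> 'a measure \<Rightarrow> 'a set \<Rightarrow> 'a set \<Rightarrow> ennreal" where
  "L_m m \<nu> A B = (\<integral>\<^sup>+ x. emeasure (m x) B * indicator A x \<partial>\<nu>)"

end

theory Submission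
  imports Defs "HOL-Probability.Probability"
begin

(* (1) implies (2): if L_m(A, B) = 0, then from nu-a.e. point outside B the walk enters B
   with probability 0 in one step, hence in every number of steps (first-step decomposition of
   the iterates, together with invariance, which makes nu-null sets m_x-null for nu-a.e. x).
   So X - B lies a.e. in N^m_D for some D in B with 0 < nu(D) < oo, and m-connectedness makes
   it null. Then nu-a.e. x in A has m_x(B) = m_x(X - B) = 0, forcing nu(A) = 0.

   (2) implies (1): N = N^m_D is closed for the walk, m_x(X - N) = 0 on N, so L_m(N, X - N) = 0.
   By invariance nu(D \<inter> N) = L_m(N, D \<inter> N) + L_m(X - N, D \<inter> N); the first term vanishes by the
   definition of N, the second equals L_m(D \<inter> N, X - N) = 0 by reversibility. Hence
   nu(X - N) >= nu(D) > 0, and (2) applied to N and X - N forces nu(N) = 0. *)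

lemma (in sigma_finite_measure) obtain_positive_finite_subset:
  assumes "B \<in> sets M" "0 < emeasure M B"
  obtains D where "D \<in> sets M" "D \<subseteq> B" "0 < emeasure M D" "emeasure M D < \<infinity>"
proof (cases "emeasure M B = \<infinity>")
  case True
  then show ?thesis
    using approx_PInf_emeasure_with_finite[OF assms(1), of 0] that by fastforce
next
  case False
  then show ?thesis
    using assms that[of B] by (simp add: less_top)
qed

locale random_walk_space =
  fixes m :: "'a::polish_space \<Rightarrow> 'a measure"
  assumes metric_random_walk: "metric_random_walk m"
begin

lemma sets_m [measurable_cong]: "sets (m x) = sets borel"
  using metric_random_walk by (simp add: metric_random_walk_def)

lemma space_m [simp]: "space (m x) = UNIV"
  using sets_eq_imp_space_eq[OF sets_m] by simp

lemma prob_space_m: "prob_space (m x)"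
  using metric_random_walk by (intro prob_spaceI) (simp add: metric_random_walk_def)

lemma measurable_m: "m \<in> borel \<rightarrow>\<^sub>M subprob_algebra borel"
  using metric_random_walk prob_space_m prob_space_imp_subprob_space sets_m
  by (intro measurable_subprob_algebra) (auto simp: metric_random_walk_def)

lemma sets_m_iter [measurable_cong]: "sets (m_iter m n x) = sets borel"
proof (cases n)
  case (Suc k)
  have "sets (m_iter m n x) = sigma_sets UNIV (sets borel)"
    unfolding Suc by (simp add: sets_measure_of)
  then show ?thesis
    using sets.sigma_sets_eq[of borel] by simp
qed (simp add: sets_m)

lemma space_m_iter [simp]: "space (m_iter m n x) = UNIV"
  using sets_eq_imp_space_eq[OF sets_m_iter] by simp

lemma m_iter_Suc_bind: "m_iter m (Suc n) x = m_iter m n x \<bind> m"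
proof -
  have "m_iter m n x \<bind> m = join (distr (m_iter m n x) (subprob_algebra borel) m)"
    by (rule bind_nonempty'')
      (auto simp: measurable_cong_sets[OF sets_m_iter refl] measurable_m)
  also have "\<dots> = m_iter m (Suc n) x"
    unfolding join_def
    by (auto intro!: measure_of_eq simp: nn_integral_distr measurable_m
        measurable_cong_sets[OF sets_m_iter refl] sets.sigma_sets_eq[of borel, simplified])
  finally show ?thesis ..
qed

lemma measurable_m_iter: "m_iter m n \<in> borel \<rightarrow>\<^sub>M subprob_algebra borel"
proof (induction n)
  case (Suc n)
  have "m_iter m (Suc n) = (\<lambda>x. m_iter m n x \<bind> m)"
    using m_iter_Suc_bind by auto
  then show ?case
    using measurable_bind[OF Suc measurable_compose[OF measurable_snd measurable_m]] by simp
qed (simp add: measurable_m)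

lemma borel_measurable_emeasure_m_iter:
  "A \<in> sets borel \<Longrightarrow> (\<lambda>x. emeasure (m_iter m n x) A) \<in> borel_measurable borel"
  by (rule measurable_compose[OF measurable_m_iter measurable_emeasure_subprob_algebra])

text \<open>The defining recursion of \<^const>\<open>m_iter\<close> adds the last step; by associativity of
  the Giry monad the first step can be split off instead.\<close>
lemma m_iter_Suc_bind_first: "m_iter m (Suc n) x = m x \<bind> m_iter m n"
proof (induction n arbitrary: x)
  case 0
  have "m_iter m 0 = m"
    by auto
  then show ?case
    by (simp only: m_iter_Suc_bind)
next
  case (Suc n)
  have "m_iter m (Suc (Suc n)) x = (m x \<bind> m_iter m n) \<bind> m"
    by (simp only: m_iter_Suc_bind[of "Suc n"] Suc)
  also have "\<dots> = m x \<bind> (\<lambda>z. m_iter m n z \<bind> m)"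
    by (rule bind_assoc[where N = borel and R = borel])
      (auto simp: measurable_cong_sets[OF sets_m refl] measurable_m_iter measurable_m)
  also have "(\<lambda>z. m_iter m n z \<bind> m) = m_iter m (Suc n)"
    by (rule ext) (simp only: m_iter_Suc_bind)
  finally show ?case .
qed

lemma emeasure_m_iter_Suc_eq_0_iff:
  assumes "A \<in> sets borel"
  shows "emeasure (m_iter m (Suc n) x) A = 0 \<longleftrightarrow> (AE z in m x. emeasure (m_iter m n z) A = 0)"
proof -
  have "emeasure (m_iter m (Suc n) x) A = (\<integral>\<^sup>+ z. emeasure (m_iter m n z) A \<partial>m x)"
    unfolding m_iter_Suc_bind_first
    by (rule emeasure_bind[where N = borel])
      (auto simp: measurable_cong_sets[OF sets_m refl] measurable_m_iter assms)
  then show ?thesis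
    using borel_measurable_emeasure_m_iter[OF assms]
    by (simp add: nn_integral_0_iff_AE measurable_cong_sets[OF sets_m refl])
qed

lemma N_set_in_borel:
  assumes "D \<in> sets borel"
  shows "N_set m D \<in> sets borel"
proof -
  have "N_set m D = (\<Inter>n. (\<lambda>x. emeasure (m_iter m n x) D) -` {0} \<inter> space borel)"
    by (auto simp: N_set_def)
  also have "\<dots> \<in> sets borel"
    using measurable_sets[OF borel_measurable_emeasure_m_iter[OF assms]]
    by (intro sets.countable_INT'') auto
  finally show ?thesis .
qed

lemma emeasure_m_Compl_N_set:
  assumes "D \<in> sets borel" "x \<in> N_set m D"
  shows "emeasure (m x) (- N_set m D) = 0"
proof -
  have "AE z in m x. emeasure (m_iter m n z) D = 0" for n
    using assms emeasure_m_iter_Suc_eq_0_iff[OF assms(1), of n x]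
    by (simp add: N_set_def del: m_iter.simps)
  then have "AE z in m x. z \<in> N_set m D"
    by (simp add: N_set_def AE_all_countable)
  then show ?thesis
    using N_set_in_borel[OF assms(1)]
    by (subst AE_iff_measurable[symmetric]) (auto simp: sets_m)
qed

lemma L_m_commute:
  assumes "reversible_measure m \<nu>" "A \<in> sets borel" "B \<in> sets borel"
  shows "L_m m \<nu> A B = L_m m \<nu> B A"
proof -
  have "(\<lambda>(x, y). indicator A x * indicator B y :: ennreal) \<in> borel_measurable (borel \<Otimes>\<^sub>M borel)"
    using assms by measurable
  then have reverse: "(\<integral>\<^sup>+ x. (\<integral>\<^sup>+ y. indicator A x * indicator B y \<partial>m x) \<partial>\<nu>) =
      (\<integral>\<^sup>+ y. (\<integral>\<^sup>+ x. indicator A x * indicator B y \<partial>m y) \<partial>\<nu>)"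
    using assms(1) unfolding reversible_measure_def by blast
  have "L_m m \<nu> A B = (\<integral>\<^sup>+ x. (\<integral>\<^sup>+ y. indicator A x * indicator B y \<partial>m x) \<partial>\<nu>)"
    unfolding L_m_def using assms(3)
    by (intro nn_integral_cong) (simp add: nn_integral_cmult_indicator sets_m mult.commute)
  also note reverse
  also have "(\<integral>\<^sup>+ y. (\<integral>\<^sup>+ x. indicator A x * indicator B y \<partial>m y) \<partial>\<nu>) = L_m m \<nu> B A"
    unfolding L_m_def using assms(2)
    by (intro nn_integral_cong) (simp add: nn_integral_multc sets_m)
  finally show ?thesis .
qed

end

locale random_walk_measure_space = random_walk_space +
  fixes \<nu> :: "'a::polish_space measure"
  assumes radon_measure: "radon_measure \<nu>"
    and invariant_measure: "invariant_measure m \<nu>"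
begin

lemma sets_\<nu> [measurable_cong]: "sets \<nu> = sets borel"
  using radon_measure by (simp add: radon_measure_def)

lemma space_\<nu> [simp]: "space \<nu> = UNIV"
  using sets_eq_imp_space_eq[OF sets_\<nu>] by simp

sublocale \<nu>: sigma_finite_measure \<nu>
  using radon_measure by (simp add: radon_measure_def)

lemma emeasure_eq_integral_emeasure_m:
  "A \<in> sets borel \<Longrightarrow> emeasure \<nu> A = (\<integral>\<^sup>+ x. emeasure (m x) A \<partial>\<nu>)"
  using invariant_measure by (simp add: invariant_measure_def sets_\<nu>)

lemma borel_measurable_emeasure_m:
  "A \<in> sets borel \<Longrightarrow> (\<lambda>x. emeasure (m x) A) \<in> borel_measurable \<nu>"
  using borel_measurable_emeasure_m_iter[of A 0] by (simp add: measurable_cong_sets[OF sets_\<nu> refl])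

lemma AE_emeasure_m_eq_0:
  assumes "A \<in> sets borel" "emeasure \<nu> A = 0"
  shows "AE x in \<nu>. emeasure (m x) A = 0"
  using assms emeasure_eq_integral_emeasure_m[OF assms(1)]
  by (simp add: nn_integral_0_iff_AE borel_measurable_emeasure_m)

lemma L_m_eq_0_iff:
  assumes "A \<in> sets borel" "B \<in> sets borel"
  shows "L_m m \<nu> A B = 0 \<longleftrightarrow> (AE x in \<nu>. x \<in> A \<longrightarrow> emeasure (m x) B = 0)"
proof -
  have "(\<lambda>x. emeasure (m x) B * indicator A x) \<in> borel_measurable \<nu>"
    using assms by (intro borel_measurable_times_ennreal borel_measurable_emeasure_m) (auto simp: sets_\<nu>)
  then have "L_m m \<nu> A B = 0 \<longleftrightarrow> (AE x in \<nu>. emeasure (m x) B * indicator A x = 0)"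
    unfolding L_m_def by (rule nn_integral_0_iff_AE)
  also have "\<dots> \<longleftrightarrow> (AE x in \<nu>. x \<in> A \<longrightarrow> emeasure (m x) B = 0)"
    by (intro AE_cong) (auto simp: indicator_def)
  finally show ?thesis .
qed

lemma emeasure_eq_L_m_add_L_m_Compl:
  assumes "A \<in> sets borel" "B \<in> sets borel"
  shows "emeasure \<nu> B = L_m m \<nu> A B + L_m m \<nu> (- A) B"
proof -
  have "emeasure \<nu> B =
      (\<integral>\<^sup>+ x. emeasure (m x) B * indicator A x + emeasure (m x) B * indicator (- A) x \<partial>\<nu>)"
    unfolding emeasure_eq_integral_emeasure_m[OF assms(2)]
    by (intro nn_integral_cong) (simp add: indicator_def)
  also have "\<dots> = L_m m \<nu> A B + L_m m \<nu> (- A) B"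
    unfolding L_m_def using assms
    by (intro nn_integral_add borel_measurable_times_ennreal borel_measurable_emeasure_m)
      (auto simp: sets_\<nu>)
  finally show ?thesis .
qed

lemma AE_m_iter_eq_0_outside:
  assumes B: "B \<in> sets borel"
    and step: "AE x in \<nu>. x \<notin> B \<longrightarrow> emeasure (m x) B = 0"
  shows "AE x in \<nu>. x \<notin> B \<longrightarrow> emeasure (m_iter m n x) B = 0"
proof (induction n)
  case 0
  show ?case
    using step by simp
next
  case (Suc n)
  \<comment> \<open>E is \<nu>-null by induction, hence m_x-null for \<nu>-a.e. x by invariance.\<close>
  define E where "E = {z. z \<notin> B \<and> emeasure (m_iter m n z) B \<noteq> 0}"
  have E: "E \<in> sets borel"
    unfolding E_def using B borel_measurable_emeasure_m_iter[OF B, of n] by measurable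
  have "emeasure \<nu> E = 0"
    using AE_iff_measurable[THEN iffD1, OF _ _ Suc.IH] E by (simp add: E_def sets_\<nu>)
  then have "AE x in \<nu>. emeasure (m x) E = 0"
    by (rule AE_emeasure_m_eq_0[OF E])
  then show ?case
    using step
  proof eventually_elim
    case (elim x)
    have "AE z in m x. z \<notin> E" "AE z in m x. x \<notin> B \<longrightarrow> z \<notin> B"
      using elim E B by (auto intro!: AE_not_in simp: null_sets_def sets_m)
    then have "AE z in m x. x \<notin> B \<longrightarrow> emeasure (m_iter m n z) B = 0"
      by eventually_elim (auto simp: E_def)
    then show ?case
      using emeasure_m_iter_Suc_eq_0_iff[OF B] by (cases "x \<in> B") (simp_all del: m_iter.simps)
  qed
qed

lemma L_m_pos_if_m_connected:
  assumes conn: "m_connected m \<nu>"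
    and A: "A \<in> sets borel" "0 < emeasure \<nu> A"
    and B: "B \<in> sets borel" "0 < emeasure \<nu> B"
    and cover: "A \<union> B = UNIV"
  shows "0 < L_m m \<nu> A B"
proof (rule ccontr)
  assume "\<not> 0 < L_m m \<nu> A B"
  then have A_to_B: "AE x in \<nu>. x \<in> A \<longrightarrow> emeasure (m x) B = 0"
    using L_m_eq_0_iff[OF A(1) B(1)] by simp
  obtain D where D: "D \<in> sets borel" "D \<subseteq> B" "0 < emeasure \<nu> D" "emeasure \<nu> D < \<infinity>"
    using \<nu>.obtain_positive_finite_subset B by (auto simp: sets_\<nu>)
  then have N_null: "N_set m D \<in> null_sets \<nu>"
    using conn by (simp add: m_connected_def sets_\<nu>)
  have "AE x in \<nu>. x \<notin> B \<longrightarrow> emeasure (m_iter m n x) B = 0" for n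
    using A_to_B cover by (intro AE_m_iter_eq_0_outside B) (auto elim!: AE_mp)
  then have "AE x in \<nu>. \<forall>n. x \<notin> B \<longrightarrow> emeasure (m_iter m n x) B = 0"
    unfolding AE_all_countable by blast
  then have "AE x in \<nu>. x \<notin> B \<longrightarrow> x \<in> N_set m D"
  proof eventually_elim
    case (elim x)
    show ?case
    proof
      assume "x \<notin> B"
      have "emeasure (m_iter m n x) D \<le> emeasure (m_iter m n x) B" for n
        using D(2) B(1) by (intro emeasure_mono) (auto simp: sets_m_iter)
      then show "x \<in> N_set m D"
        using elim \<open>x \<notin> B\<close> by (simp add: N_set_def)
    qed
  qed
  then have "AE x in \<nu>. x \<in> B"
    using AE_not_in[OF N_null] by eventually_elim auto
  then have "emeasure \<nu> (- B) = 0"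
    using B by (subst AE_iff_measurable[symmetric]) (auto simp: sets_\<nu>)
  then have "AE x in \<nu>. emeasure (m x) (- B) = 0"
    using B by (intro AE_emeasure_m_eq_0) auto
  then have "AE x in \<nu>. x \<notin> A"
    using A_to_B
  proof eventually_elim
    case (elim x)
    have "1 = emeasure (m x) (B \<union> - B)"
      using prob_space.emeasure_space_1[OF prob_space_m] by simp
    also have "\<dots> \<le> emeasure (m x) B + emeasure (m x) (- B)"
      using B by (intro emeasure_subadditive) (auto simp: sets_m)
    finally show ?case
      using elim by auto
  qed
  then have "emeasure \<nu> A = 0"
    using A by (subst AE_iff_measurable[symmetric]) (auto simp: sets_\<nu>)
  then show False
    using A by simp
qed

lemma m_connected_if_L_m_pos:
  assumes reversible: "reversible_measure m \<nu>"
    and L_m_pos: "\<And>A B. A \<in> sets borel \<Longrightarrow> B \<in> sets borel \<Longrightarrow> 0 < emeasure \<nu> A \<Longrightarrow>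
      0 < emeasure \<nu> B \<Longrightarrow> A \<union> B = UNIV \<Longrightarrow> 0 < L_m m \<nu> A B"
  shows "m_connected m \<nu>"
  unfolding m_connected_def
proof (intro ballI impI)
  fix D
  assume "D \<in> sets \<nu>" and D_pos: "0 < emeasure \<nu> D \<and> emeasure \<nu> D < \<infinity>"
  then have D: "D \<in> sets borel"
    by (simp add: sets_\<nu>)
  define N where "N = N_set m D"
  have N: "N \<in> sets borel" "- N \<in> sets borel"
    unfolding N_def using N_set_in_borel[OF D] by auto
  have N_closed: "L_m m \<nu> N (- N) = 0"
    using N by (simp add: L_m_eq_0_iff N_def emeasure_m_Compl_N_set[OF D])
  have "emeasure (m x) (D \<inter> N) = 0" if "x \<in> N" for x
  proof -
    have "emeasure (m_iter m 0 x) D = 0"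
      using that unfolding N_def N_set_def by blast
    then show ?thesis
      using D by (metis emeasure_mono inf_le1 le_zero_eq m_iter.simps(1) sets_m)
  qed
  then have "L_m m \<nu> N (D \<inter> N) = 0"
    using N D by (simp add: L_m_eq_0_iff)
  moreover have "L_m m \<nu> (D \<inter> N) (- N) = 0"
    using N D by (simp add: L_m_eq_0_iff N_def emeasure_m_Compl_N_set[OF D])
  then have "L_m m \<nu> (- N) (D \<inter> N) = 0"
    using N D L_m_commute[OF reversible, of "- N" "D \<inter> N"] by auto
  ultimately have D_N_null: "emeasure \<nu> (D \<inter> N) = 0"
    using emeasure_eq_L_m_add_L_m_Compl[of N "D \<inter> N"] N D by auto
  have "emeasure \<nu> D \<le> emeasure \<nu> (D \<inter> N \<union> - N)"
    using N D by (intro emeasure_mono) (auto simp: sets_\<nu>)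
  also have "\<dots> \<le> emeasure \<nu> (D \<inter> N) + emeasure \<nu> (- N)"
    using N D by (intro emeasure_subadditive) (auto simp: sets_\<nu>)
  finally have "emeasure \<nu> D \<le> emeasure \<nu> (- N)"
    using D_N_null by simp
  then have "0 < emeasure \<nu> (- N)"
    using D_pos by (auto intro: order_less_le_trans)
  then have "emeasure \<nu> N = 0"
    using L_m_pos[of N "- N"] N N_closed by (auto simp: zero_less_iff_neq_zero)
  then show "N_set m D \<in> null_sets \<nu>"
    using N by (simp add: N_def null_sets_def sets_\<nu>)
qed

end

theorem proposition2p11:
  fixes m :: "'a::polish_space \<Rightarrow> 'a measure" and \<nu> :: "'a measure"
  assumes "metric_random_walk m"
    and "radon_measure \<nu>"
    and "invariant_measure m \<nu>"
    and "reversible_measure m \<nu>"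
  shows "m_connected m \<nu> \<longleftrightarrow>
    (\<forall>A B. A \<in> sets \<nu> \<longrightarrow> B \<in> sets \<nu> \<longrightarrow> 0 < emeasure \<nu> A \<longrightarrow> 0 < emeasure \<nu> B \<longrightarrow>
       A \<union> B = UNIV \<longrightarrow> 0 < L_m m \<nu> A B)"
proof -
  interpret random_walk_measure_space m \<nu>
    using assms(1-3) by unfold_locales
  show ?thesis
    using L_m_pos_if_m_connected m_connected_if_L_m_pos[OF assms(4)] by (auto simp: sets_\<nu>)
qed

end
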